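(* Let $\mathcal{H}$ be a finite set of hypotheses, $\mathcal{T}$ a finite set of tests, $\mathcal{O}$ a finite set of outcomes, each $h\in\mathcal{H}$ a function $h:\mathcal{T}\to\mathcal{O}$, and $\mathcal{R}$ a finite nonempty collection of decision regions $r\subseteq\mathcal{H}$ with $\bigcup_{r\in\mathcal{R}} r=\mathcal{H}$. Let $\mathcal{G}$ be the set of subregions, let $$k=\min\Big(\max_{h\in\mathcal{H}}|\{r\in\mathcal{R}: h\in r\}|,\ \max_{r\in\mathcal{R}}|\{g\in\mathcal{G}: g\subseteq r\}|\Big)+1,$$ and let $\mathcal{E}$ be the set of all multisets $e$ of exactly $k$ subregions (repetitions allowed) such that there is no $r\in\mathcal{R}$ with $g\subseteq r$ for every $g\in e$. For a set of test–outcome pairs $\mathcal{S}\subseteq\mathcal{T}\times\mathcal{O}$, let $\mathcal{V}(\mathcal{S})=\{h\in\mathcal{H}: h(t)=o \text{ for all }(t,o)\in\mathcal{S}\}$ and let $\mathcal{E}(\mathcal{S})$ be the set of hyperedges $e\in\mathcal{E}$ such that every subregion $g\in e$ contains at least one hypothesis of $\mathcal{V}(\mathcal{S})$. Then for every $\mathcal{S}\subseteq\mathcal{T}\times\mathcal{O}$, $$\mathcal{E}(\mathcal{S})=\emptyset \iff \exists\, r\in\mathcal{R}:\ \mathcal{V}(\mathcal{S})\subseteq r.$$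
   Context: Subregions: hypotheses $h,h'$ are grouped into the same subregion iff they belong to exactly the same decision regions (for all $r\in\mathcal{R}$: $h\in r\Leftrightarrow h'\in r$); $\mathcal{G}$ is the set of these equivalence classes, and for $g\in\mathcal{G}$, $r\in\mathcal{R}$ we write $g\subseteq r$ if every hypothesis of $g$ lies in $r$. The hyperedges $\mathcal{E}$ form the "splitting hypergraph" on the node set $\mathcal{G}$; a hyperedge is "cut" by evidence $\mathcal{S}$ when it is not in $\mathcal{E}(\mathcal{S})$. *)

theory Defs
  imports Main "HOL-Library.Multiset"
begin

text \<open>Hypotheses are elements of an abstract type; ev h t is the outcome h(t).\<close>

definition subregions :: "'h set \<Rightarrow> 'h set set \<Rightarrow> 'h set set" where
  "subregions H R = {{h'\<in>H. \<forall>r\<in>R. (h \<in> r \<longleftrightarrow> h' \<in> r)} | h. h \<in> H}"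

definition hyper_k :: "'h set \<Rightarrow> 'h set set \<Rightarrow> nat" where
  "hyper_k H R = min (Max {card {r\<in>R. h \<in> r} | h. h \<in> H})
                     (Max {card {g\<in>subregions H R. g \<subseteq> r} | r. r \<in> R}) + 1"

definition hyperedges :: "'h set \<Rightarrow> 'h set set \<Rightarrow> 'h set multiset set" where
  "hyperedges H R = {e. size e = hyper_k H R \<and> set_mset e \<subseteq> subregions H R
                        \<and> \<not> (\<exists>r\<in>R. \<forall>g\<in>#e. g \<subseteq> r)}"

definition version_space :: "'h set \<Rightarrow> ('h \<Rightarrow> 't \<Rightarrow> 'o) \<Rightarrow> ('t \<times> 'o) set \<Rightarrow> 'h set" where
  "version_space H ev S = {h\<in>H. \<forall>(t,out)\<in>S. ev h t = out}"

definition remaining_edges ::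
  "'h set \<Rightarrow> 'h set set \<Rightarrow> ('h \<Rightarrow> 't \<Rightarrow> 'o) \<Rightarrow> ('t \<times> 'o) set \<Rightarrow> 'h set multiset set" where
  "remaining_edges H R ev S =
     {e\<in>hyperedges H R. \<forall>g\<in>#e. g \<inter> version_space H ev S \<noteq> {}}"

end

theory Submission
  imports Defs
begin

text \<open>Subregions are the atoms of the Boolean algebra generated by the regions, so a subregion
  meeting a region lies inside it; hence an edge all of whose subregions meet a version space
  contained in a region r would be covered by r. Conversely, if no region contains the version
  space, every region misses some subregion meeting it, and a family of such subregions covered by
  no region can be chosen with at most k elements in two ways: one witness for each region
  containing a fixed hypothesis of the version space together with that hypothesis' subregion, or
  any k of them once there are more than the largest number of subregions inside a region.
  Padding such a family with repetitions gives a hyperedge that is not cut.\<close>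

definition subregion_of :: "'h set \<Rightarrow> 'h set set \<Rightarrow> 'h \<Rightarrow> 'h set" where
  "subregion_of H R h = {h'\<in>H. \<forall>r\<in>R. (h \<in> r \<longleftrightarrow> h' \<in> r)}"

lemma subregions_eq_image: "subregions H R = subregion_of H R ` H"
  unfolding subregions_def subregion_of_def by auto

lemma self_mem_subregion_of: "h \<in> H \<Longrightarrow> h \<in> subregion_of H R h"
  unfolding subregion_of_def by auto

lemma subregion_of_subset_iff:
  assumes "h \<in> H" and "r \<in> R"
  shows "subregion_of H R h \<subseteq> r \<longleftrightarrow> h \<in> r"
  using assms unfolding subregion_of_def by auto

lemma subregion_subset_if_meets:
  assumes "g \<in> subregions H R" and "r \<in> R" and "g \<inter> r \<noteq> {}"
  shows "g \<subseteq> r"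
  using assms unfolding subregions_eq_image subregion_of_def by blast

lemma obtain_uncovered_subset_card_le_covering_regions:
  assumes "finite R" and "g0 \<in> Gs" and wit: "\<forall>r\<in>R. \<exists>g\<in>Gs. \<not> g \<subseteq> r"
  obtains F where "F \<subseteq> Gs" and "card F \<le> card {r\<in>R. g0 \<subseteq> r} + 1"
    and "\<not> (\<exists>r\<in>R. \<forall>g\<in>F. g \<subseteq> r)"
proof -
  obtain f where f: "\<forall>r\<in>R. f r \<in> Gs \<and> \<not> f r \<subseteq> r"
  proof -
    have "\<forall>r\<in>R. \<exists>g. g \<in> Gs \<and> \<not> g \<subseteq> r" using wit by blast
    then show thesis using that by (metis bchoice)
  qed
  define R0 where "R0 = {r\<in>R. g0 \<subseteq> r}"
  define F where "F = insert g0 (f ` R0)"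
  have "finite R0" using assms(1) unfolding R0_def by simp
  then have "card F \<le> card (f ` R0) + 1"
    unfolding F_def by (simp add: card_insert_if)
  also have "\<dots> \<le> card R0 + 1"
    using \<open>finite R0\<close> card_image_le by simp
  finally have card_F: "card F \<le> card R0 + 1" .
  have sub_F: "F \<subseteq> Gs" using f assms(2) unfolding F_def R0_def by auto
  have uncovered_F: "\<not> (\<exists>r\<in>R. \<forall>g\<in>F. g \<subseteq> r)"
  proof
    assume "\<exists>r\<in>R. \<forall>g\<in>F. g \<subseteq> r"
    then obtain r where r: "r \<in> R" "\<forall>g\<in>F. g \<subseteq> r" by blast
    then have "r \<in> R0" unfolding F_def R0_def by simp
    then show False using f r unfolding F_def by auto
  qed
  show thesis using that[OF sub_F _ uncovered_F] card_F unfolding R0_def .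
qed

lemma obtain_uncovered_subset_card_le_bound:
  assumes "finite Gs" and wit: "\<forall>r\<in>R. \<exists>g\<in>Gs. \<not> g \<subseteq> r"
    and bound: "\<forall>r\<in>R. card {g\<in>Gs. g \<subseteq> r} \<le> B"
  obtains F where "F \<subseteq> Gs" and "card F \<le> B + 1" and "\<not> (\<exists>r\<in>R. \<forall>g\<in>F. g \<subseteq> r)"
proof (cases "card Gs \<le> B + 1")
  case True
  have "\<not> (\<exists>r\<in>R. \<forall>g\<in>Gs. g \<subseteq> r)" using wit by blast
  with True show thesis by (intro that[of Gs]) simp_all
next
  case False
  then obtain F where F: "F \<subseteq> Gs" "card F = B + 1"
    using obtain_subset_with_card_n[of "B + 1" Gs] by (metis not_le less_imp_le)
  have "\<not> (\<exists>r\<in>R. \<forall>g\<in>F. g \<subseteq> r)"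
  proof
    assume "\<exists>r\<in>R. \<forall>g\<in>F. g \<subseteq> r"
    then obtain r where r: "r \<in> R" "\<forall>g\<in>F. g \<subseteq> r" by blast
    have "F \<subseteq> {g\<in>Gs. g \<subseteq> r}" using F(1) r(2) by blast
    then have "card F \<le> card {g\<in>Gs. g \<subseteq> r}"
      using assms(1) by (intro card_mono) simp_all
    moreover have "card {g\<in>Gs. g \<subseteq> r} \<le> B" using bound r(1) by blast
    ultimately show False using F(2) by linarith
  qed
  with F show thesis by (intro that[of F]) simp_all
qed

lemma obtain_mset_with_set_and_size:
  assumes "finite F" and "F \<noteq> {}" and "card F \<le> k"
  obtains e where "set_mset e = F" and "size e = k"
proof -
  obtain g0 where "g0 \<in> F" using assms(2) by blast
  define e where "e = mset_set F + replicate_mset (k - card F) g0"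
  have "set_mset e = F" unfolding e_def using assms(1) \<open>g0 \<in> F\<close> by auto
  moreover have "size e = k" unfolding e_def using assms(1,3) by simp
  ultimately show thesis using that by blast
qed

lemma hyperedges_meeting_empty_if_subset_region:
  assumes "r \<in> R" and "W \<subseteq> r"
  shows "{e\<in>hyperedges H R. \<forall>g\<in>#e. g \<inter> W \<noteq> {}} = {}"
proof (rule ccontr)
  assume "{e\<in>hyperedges H R. \<forall>g\<in>#e. g \<inter> W \<noteq> {}} \<noteq> {}"
  then obtain e where e: "e \<in> hyperedges H R" "\<forall>g\<in>#e. g \<inter> W \<noteq> {}" by blast
  have "g \<subseteq> r" if "g \<in># e" for g
  proof (rule subregion_subset_if_meets)
    show "g \<in> subregions H R" using e(1) that unfolding hyperedges_def by auto
    show "g \<inter> r \<noteq> {}" using e(2) that assms(2) by blast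
  qed (use assms(1) in simp)
  then have "\<forall>g\<in>#e. g \<subseteq> r" by blast
  then show False using e(1) assms(1) unfolding hyperedges_def by blast
qed

definition meeting_subregions :: "'h set \<Rightarrow> 'h set set \<Rightarrow> 'h set \<Rightarrow> 'h set set" where
  "meeting_subregions H R W = {g\<in>subregions H R. g \<inter> W \<noteq> {}}"

lemma finite_meeting_subregions: "finite H \<Longrightarrow> finite (meeting_subregions H R W)"
  unfolding meeting_subregions_def subregions_eq_image by simp

lemma subregion_of_mem_meeting_subregions:
  assumes "W \<subseteq> H" and "w \<in> W"
  shows "subregion_of H R w \<in> meeting_subregions H R W"
proof -
  have "w \<in> H" using assms by blast
  then have "subregion_of H R w \<in> subregions H R"
    unfolding subregions_eq_image by (rule imageI)
  moreover have "w \<in> subregion_of H R w \<inter> W"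
    using self_mem_subregion_of[OF \<open>w \<in> H\<close>] assms(2) by (rule IntI)
  ultimately show ?thesis unfolding meeting_subregions_def by blast
qed

lemma meeting_subregion_not_subset:
  assumes "W \<subseteq> H" and "r \<in> R" and "\<not> W \<subseteq> r"
  shows "\<exists>g\<in>meeting_subregions H R W. \<not> g \<subseteq> r"
proof -
  obtain w where w: "w \<in> W" "w \<notin> r" using assms(3) by blast
  then have "\<not> subregion_of H R w \<subseteq> r"
    using subregion_of_subset_iff[of w H r R] assms(1,2) by blast
  with subregion_of_mem_meeting_subregions[OF assms(1) w(1)] show ?thesis
    by (rule bexI[rotated])
qed

lemma obtain_uncovered_meeting_subregions:
  assumes "finite H" and "finite R" and "R \<noteq> {}" and "W \<subseteq> H"
    and uncovered: "\<not> (\<exists>r\<in>R. W \<subseteq> r)"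
  obtains F where "F \<subseteq> meeting_subregions H R W" and "card F \<le> hyper_k H R"
    and "\<not> (\<exists>r\<in>R. \<forall>g\<in>F. g \<subseteq> r)"
proof -
  let ?Gs = "meeting_subregions H R W"
  define A where "A = Max {card {r\<in>R. h \<in> r} | h. h \<in> H}"
  define B where "B = Max {card {g\<in>subregions H R. g \<subseteq> r} | r. r \<in> R}"
  have k: "hyper_k H R = min A B + 1" unfolding hyper_k_def A_def B_def by (rule refl)
  have wit: "\<forall>r\<in>R. \<exists>g\<in>?Gs. \<not> g \<subseteq> r"
  proof
    fix r assume "r \<in> R"
    with uncovered have "\<not> W \<subseteq> r" by blast
    with assms(4) \<open>r \<in> R\<close> show "\<exists>g\<in>?Gs. \<not> g \<subseteq> r" by (rule meeting_subregion_not_subset)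
  qed
  obtain w0 where "w0 \<in> W" using uncovered assms(3) by blast
  then have "w0 \<in> H" using assms(4) by blast
  obtain FA where FA: "FA \<subseteq> ?Gs" "\<not> (\<exists>r\<in>R. \<forall>g\<in>FA. g \<subseteq> r)"
    and card_FA: "card FA \<le> card {r\<in>R. subregion_of H R w0 \<subseteq> r} + 1"
    by (rule obtain_uncovered_subset_card_le_covering_regions[OF assms(2)
          subregion_of_mem_meeting_subregions[OF assms(4) \<open>w0 \<in> W\<close>] wit])
  have "{r\<in>R. subregion_of H R w0 \<subseteq> r} = {r\<in>R. w0 \<in> r}"
    by (intro Collect_cong) (use subregion_of_subset_iff[OF \<open>w0 \<in> H\<close>] in blast)
  moreover have "card {r\<in>R. w0 \<in> r} \<le> A"
    unfolding A_def using \<open>w0 \<in> H\<close> assms(1) by (intro Max_ge) auto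
  ultimately have "card FA \<le> A + 1" using card_FA by simp
  have bound: "\<forall>r\<in>R. card {g\<in>?Gs. g \<subseteq> r} \<le> B"
  proof
    fix r assume "r \<in> R"
    have "card {g\<in>?Gs. g \<subseteq> r} \<le> card {g\<in>subregions H R. g \<subseteq> r}"
      using assms(1) unfolding meeting_subregions_def
      by (intro card_mono) (auto simp: subregions_eq_image)
    also have "\<dots> \<le> B" unfolding B_def using \<open>r \<in> R\<close> assms(2) by (intro Max_ge) auto
    finally show "card {g\<in>?Gs. g \<subseteq> r} \<le> B" .
  qed
  obtain FB where FB: "FB \<subseteq> ?Gs" "card FB \<le> B + 1" "\<not> (\<exists>r\<in>R. \<forall>g\<in>FB. g \<subseteq> r)"
    by (rule obtain_uncovered_subset_card_le_bound[OF finite_meeting_subregions[OF assms(1)]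
          wit bound])
  show thesis
  proof (cases "A \<le> B")
    case True
    then show thesis using that[OF FA(1) _ FA(2)] \<open>card FA \<le> A + 1\<close> k by simp
  next
    case False
    then show thesis using that[OF FB(1) _ FB(3)] FB(2) k by simp
  qed
qed

lemma hyperedge_meeting_exists_if_uncovered:
  assumes "finite H" and "finite R" and "R \<noteq> {}" and "W \<subseteq> H"
    and uncovered: "\<not> (\<exists>r\<in>R. W \<subseteq> r)"
  shows "\<exists>e\<in>hyperedges H R. \<forall>g\<in>#e. g \<inter> W \<noteq> {}"
proof -
  obtain F where F: "F \<subseteq> meeting_subregions H R W" "card F \<le> hyper_k H R"
    "\<not> (\<exists>r\<in>R. \<forall>g\<in>F. g \<subseteq> r)"
    by (rule obtain_uncovered_meeting_subregions[OF assms])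
  have "finite F"
    using F(1) finite_meeting_subregions[OF assms(1)] by (rule finite_subset)
  moreover have "F \<noteq> {}" using F(3) assms(3) by blast
  ultimately obtain e where e: "set_mset e = F" "size e = hyper_k H R"
    using F(2) by (rule obtain_mset_with_set_and_size)
  have "e \<in> hyperedges H R"
    using e F(1,3) unfolding hyperedges_def meeting_subregions_def by auto
  moreover have "\<forall>g\<in>#e. g \<inter> W \<noteq> {}"
    using e(1) F(1) unfolding meeting_subregions_def by blast
  ultimately show ?thesis by blast
qed

lemma hyperedges_meeting_empty_iff:
  assumes "finite H" and "finite R" and "R \<noteq> {}" and "W \<subseteq> H"
  shows "{e\<in>hyperedges H R. \<forall>g\<in>#e. g \<inter> W \<noteq> {}} = {} \<longleftrightarrow> (\<exists>r\<in>R. W \<subseteq> r)"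
  using hyperedges_meeting_empty_if_subset_region hyperedge_meeting_exists_if_uncovered[OF assms]
  by blast

theorem theorem1:
  fixes H :: "'h set" and T :: "'t set" and Out :: "'o set"
    and ev :: "'h \<Rightarrow> 't \<Rightarrow> 'o" and R :: "'h set set"
  assumes "finite H" and "finite T" and "finite Out"
    and "\<forall>h\<in>H. \<forall>t\<in>T. ev h t \<in> Out"
    and "finite R" and "R \<noteq> {}" and "\<forall>r\<in>R. r \<subseteq> H" and "\<Union>R = H"
    and "S \<subseteq> T \<times> Out"
  shows "remaining_edges H R ev S = {} \<longleftrightarrow> (\<exists>r\<in>R. version_space H ev S \<subseteq> r)"
proof -
  have "version_space H ev S \<subseteq> H" unfolding version_space_def by auto
  then show ?thesis
    unfolding remaining_edges_def
    using hyperedges_meeting_empty_iff[OF assms(1,5,6)] by blast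
qed

end
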